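(* Let $n=p_1p_2\cdots p_r$, where $r\geq 3$ and $p_1<p_2<\cdots<p_r$ are primes, and let $3\leq s\leq r$. Then $\deg(p_{s-1}p_s\cdots p_r)\geq\deg(p_sp_{s+1}\cdots p_r)$ in $\mathcal{P}(C_n)$ if and only if $$p_sp_{s+1}\cdots p_r\geq\left(\frac{p_1p_2\cdots p_{s-2}}{\phi(p_1p_2\cdots p_{s-2})}-1\right)\phi(p_{s-1})+1. \qquad ( * )$$ Further, $\deg(p_{s-1}p_s\cdots p_r)=\deg(p_sp_{s+1}\cdots p_r)$ if and only if equality holds in $( * )$.
   Context: For a finite group $G$, the power graph $\mathcal{P}(G)$ is the simple undirected graph with vertex set $G$ in which two distinct vertices are adjacent if one is an integral power of the other. $C_n$ denotes the cyclic group of order $n$, identified with $\mathbb{Z}_n=\{0,1,\ldots,n-1\}$, so a positive divisor $d<n$ of $n$ is regarded as the element $d\in\mathbb{Z}_n$. $\deg(a)$ is the degree of vertex $a$ in $\mathcal{P}(C_n)$ and $\phi$ is Euler's totient function. *)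

theory Defs
  imports "HOL-Number_Theory.Number_Theory"
begin

text \<open>Power graph of the cyclic group C_n, identified with Z_n = {0,...,n-1} (additive).
  An integral power of a is k*a mod n for an integer k.\<close>

definition cyc_power_of :: "nat \<Rightarrow> nat \<Rightarrow> nat \<Rightarrow> bool" where
  "cyc_power_of n b a \<longleftrightarrow> (\<exists>k::int. int b = (k * int a) mod int n)"

definition power_graph_adj :: "nat \<Rightarrow> nat \<Rightarrow> nat \<Rightarrow> bool" where
  "power_graph_adj n a b \<longleftrightarrow> a \<in> {0..<n} \<and> b \<in> {0..<n} \<and> a \<noteq> b \<and>
     (cyc_power_of n b a \<or> cyc_power_of n a b)"

definition pg_deg :: "nat \<Rightarrow> nat \<Rightarrow> nat" where
  "pg_deg n a = card {b \<in> {0..<n}. power_graph_adj n a b}"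

end

theory Submission imports Defs begin

text \<open>Let \<open>n = M g\<close> with \<open>coprime M g\<close>. The neighbours of \<open>g\<close> in the power graph of \<open>C\<^sub>n\<close> are
  its powers, the \<open>M\<close> multiples of \<open>g\<close>, together with the elements having \<open>g\<close> as a power, i.e.
  those \<open>x\<close> with \<open>gcd x n\<close> dividing \<open>g\<close>; these are the \<open>g \<phi>(M)\<close> residues coprime to \<open>M\<close>, and
  the two sets share \<open>\<phi>(M)\<close> elements. Hence \<open>deg g = M - 1 + \<phi>(M) (g - 1)\<close>.
  Write \<open>A = p_1 \<cdots> p_(s-2)\<close>, \<open>q = p_(s-1)\<close>, \<open>B = p_s \<cdots> p_r\<close> and apply this to \<open>g = q B\<close>
  (with \<open>M = A\<close>) and to \<open>g = B\<close> (with \<open>M = A q\<close>): since \<open>\<phi>(A q) = \<phi>(A) (q - 1)\<close>,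
  \<open>deg (q B) - deg B = \<phi>(A) (B - (A / \<phi>(A) - 1) \<phi>(q) - 1)\<close>, whose sign decides both claims.\<close>

lemma cyc_power_of_divisor_iff:
  assumes "g dvd n" "b < n"
  shows "cyc_power_of n b g \<longleftrightarrow> g dvd b"
proof
  assume "cyc_power_of n b g"
  then obtain k where k: "int b = (k * int g) mod int n"
    unfolding cyc_power_of_def by blast
  have "int g dvd (k * int g) mod int n"
    using assms(1) by (simp add: dvd_mod)
  then show "g dvd b" using k by (metis int_dvd_int_iff)
next
  assume "g dvd b"
  then obtain c where "b = g * c" by blast
  then have "int b = (int c * int g) mod int n"
    using assms(2) by (metis mod_less of_nat_mod of_nat_mult mult.commute)
  then show "cyc_power_of n b g" unfolding cyc_power_of_def by blast
qed

lemma cyc_power_of_iff_gcd_dvd: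
  assumes "g < n"
  shows "cyc_power_of n g b \<longleftrightarrow> gcd b n dvd g"
proof
  assume "cyc_power_of n g b"
  then obtain k where k: "int g = (k * int b) mod int n"
    unfolding cyc_power_of_def by blast
  have "gcd (int b) (int n) dvd (k * int b) mod int n"
    by (simp add: dvd_mod)
  then show "gcd b n dvd g" using k by (metis gcd_int_int_eq int_dvd_int_iff)
next
  assume "gcd b n dvd g"
  then obtain c where c: "g = gcd b n * c" by blast
  obtain u v where uv: "u * int b + v * int n = gcd (int b) (int n)"
    using bezout_int by blast
  have "int g = (u * int b + v * int n) * int c"
    using c uv by (simp add: gcd_int_int_eq)
  also have "\<dots> = u * int c * int b + (v * int c) * int n"
    by (simp add: algebra_simps)
  finally have "int g mod int n = (u * int c * int b) mod int n"
    by simp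
  moreover have "int g mod int n = int g"
    using assms by simp
  ultimately have "int g = (u * int c * int b) mod int n"
    by simp
  then show "cyc_power_of n g b" unfolding cyc_power_of_def by blast
qed

lemma gcd_dvd_iff_coprime_cofactor:
  fixes b g M :: nat
  assumes "coprime M g"
  shows "gcd b (M * g) dvd g \<longleftrightarrow> coprime b M"
proof
  assume gcd_dvd: "gcd b (M * g) dvd g"
  show "coprime b M"
  proof (rule coprimeI)
    fix d assume "d dvd b" "d dvd M"
    then have "d dvd g" using gcd_dvd by (meson dvd_mult2 gcd_greatest dvd_trans)
    with \<open>d dvd M\<close> assms show "is_unit d" using coprime_common_divisor by blast
  qed
next
  assume "coprime b M"
  then show "gcd b (M * g) dvd g" by (simp add: gcd_mult_right_left_cancel)
qed

lemma power_graph_adj_divisor_iff: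
  fixes M g b :: nat
  assumes "coprime M g" "M \<ge> 2" "g > 0" "b < M * g"
  shows "power_graph_adj (M * g) g b \<longleftrightarrow> b \<noteq> g \<and> (g dvd b \<or> coprime b M)"
proof -
  have "g < M * g" using assms(2,3) by simp
  then show ?thesis
    unfolding power_graph_adj_def using assms(4)
    by (auto simp: cyc_power_of_divisor_iff cyc_power_of_iff_gcd_dvd
        gcd_dvd_iff_coprime_cofactor[OF assms(1)])
qed

lemma totient_eq_card_coprime_less:
  "totient M = card {y. y < M \<and> coprime y M}"
proof (cases "M \<ge> 2")
  case True
  have "y > 0" if "coprime y M" for y
    using that True by (cases y) auto
  then have "totatives M = {y. y < M \<and> coprime y M}"
    using True by (auto simp: in_totatives_iff intro: totatives_less)
  then show ?thesis by (simp add: totient_def)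
next
  case False
  then consider "M = 0" | "M = 1" by linarith
  then show ?thesis by cases auto
qed

lemma card_coprime_less_mult:
  "card {x. x < M * g \<and> coprime x M} = g * totient M"
proof (induction g)
  case 0
  then show ?case by simp
next
  case (Suc g)
  define C where "C k = {x. x < M * k \<and> coprime x M}" for k
  define T where "T = (\<lambda>y. M * g + y) ` {y. y < M \<and> coprime y M}"
  have shift: "coprime (M * g + y) M \<longleftrightarrow> coprime y M" for y
    by (metis coprime_commute coprime_iff_gcd_eq_1 gcd_add_mult mult.commute)
  have "C (Suc g) = C g \<union> T"
  proof (intro equalityI subsetI)
    fix x assume x: "x \<in> C (Suc g)"
    show "x \<in> C g \<union> T"
    proof (cases "x < M * g")
      case False
      then have "x = M * g + (x - M * g)" by simp
      moreover have "x - M * g < M" using x False by (simp add: C_def less_diff_conv2)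
      ultimately show ?thesis
        using x shift[of "x - M * g"] unfolding C_def T_def by (auto simp: image_iff)
    qed (use x in \<open>simp add: C_def\<close>)
  next
    fix x assume "x \<in> C g \<union> T"
    then show "x \<in> C (Suc g)"
      unfolding C_def T_def using shift by auto
  qed
  moreover have "C g \<inter> T = {}" unfolding C_def T_def by auto
  moreover have "card T = totient M"
    unfolding T_def by (simp add: card_image totient_eq_card_coprime_less)
  ultimately show ?case
    using Suc.IH card_Un_disjoint[of "C g" T] unfolding C_def T_def by simp
qed

lemma card_multiples_less_mult:
  fixes M g :: nat
  assumes "g > 0"
  shows "card {x. x < M * g \<and> g dvd x} = M"
proof -
  have "{x. x < M * g \<and> g dvd x} = (\<lambda>k. g * k) ` {..<M}"
    using assms by (auto simp: mult.commute elim!: dvdE)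
  then show ?thesis
    using assms by (simp add: card_image inj_on_def)
qed

lemma card_multiples_coprime_less_mult:
  fixes M g :: nat
  assumes "coprime M g" "g > 0"
  shows "card {x. x < M * g \<and> g dvd x \<and> coprime x M} = totient M"
proof -
  have "{x. x < M * g \<and> g dvd x \<and> coprime x M} = (\<lambda>k. g * k) ` {k. k < M \<and> coprime k M}"
    using assms by (auto simp: mult.commute coprime_commute elim!: dvdE)
  then show ?thesis
    using assms by (simp add: card_image inj_on_def totient_eq_card_coprime_less)
qed

lemma pg_deg_coprime_divisor:
  fixes M g :: nat
  assumes "coprime M g" "M \<ge> 2" "g > 0"
  shows "pg_deg (M * g) g = M - 1 + totient M * (g - 1)"
proof -
  define S1 where "S1 = {x. x < M * g \<and> g dvd x}"
  define S2 where "S2 = {x. x < M * g \<and> coprime x M}"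
  have nbhd: "{b \<in> {0..<M * g}. power_graph_adj (M * g) g b} = (S1 \<union> S2) - {g}"
    unfolding S1_def S2_def using power_graph_adj_divisor_iff[OF assms] by auto
  have "S1 \<inter> S2 = {x. x < M * g \<and> g dvd x \<and> coprime x M}"
    unfolding S1_def S2_def by auto
  then have "card (S1 \<union> S2) + totient M = M + g * totient M"
    using card_Un_Int[of S1 S2] assms
    by (simp add: S1_def S2_def card_multiples_less_mult card_coprime_less_mult
        card_multiples_coprime_less_mult)
  moreover have "g \<in> S1 \<union> S2"
    unfolding S1_def using assms by simp
  moreover have "totient M \<ge> 1"
    using assms by (simp add: Suc_leI)
  ultimately have "card ((S1 \<union> S2) - {g}) = M - 1 + totient M * (g - 1)"
    using assms by (simp add: S1_def S2_def algebra_simps diff_mult_distrib2)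
  then show ?thesis
    unfolding pg_deg_def nbhd .
qed

lemma pg_deg_difference:
  fixes A q B :: nat
  assumes "A \<ge> 2" "prime q" "B > 0" "coprime A q" "coprime (A * q) B"
  shows "real (pg_deg (A * q * B) (q * B)) - real (pg_deg (A * q * B) B) =
    real (totient A) * (real B - ((real A / real (totient A) - 1) * real (totient q) + 1))"
proof -
  have q2: "q \<ge> 2" using assms(2) by (rule prime_ge_2_nat)
  have "coprime A (q * B)" using assms(4,5) by simp
  then have deg_qB: "pg_deg (A * q * B) (q * B) = A - 1 + totient A * (q * B - 1)"
    using pg_deg_coprime_divisor[of A "q * B"] assms(1,3) q2 by (simp add: mult.assoc)
  have "A * q \<ge> 2" using assms(1) q2 by (metis le_trans mult_le_mono2 mult_1_right one_le_numeral)
  then have deg_B: "pg_deg (A * q * B) B = A * q - 1 + totient A * (q - 1) * (B - 1)"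
    using pg_deg_coprime_divisor[OF assms(5) _ assms(3)] assms(2,4) by (simp add: totient_mult_coprime totient_prime)
  have "real (A * q - 1) = real A * real q - 1" "real (q * B - 1) = real q * real B - 1"
    "real (A - 1) = real A - 1" "real (q - 1) = real q - 1" "real (B - 1) = real B - 1"
    using assms(1,3) q2 by (simp_all add: of_nat_diff)
  then have deg_qB_real: "real (pg_deg (A * q * B) (q * B)) = real A - 1 + real (totient A) * (real q * real B - 1)"
    and deg_B_real: "real (pg_deg (A * q * B) B) = real A * real q - 1 + real (totient A) * (real q - 1) * (real B - 1)"
    unfolding deg_qB deg_B of_nat_add of_nat_mult by simp_all
  have "totient A > 0" using assms(1) by simp
  then show ?thesis
    unfolding deg_qB_real deg_B_real totient_prime[OF assms(2)] \<open>real (q - 1) = real q - 1\<close>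
    by (simp add: field_simps)
qed

lemma pg_deg_compare:
  fixes A q B :: nat
  assumes "A \<ge> 2" "prime q" "B > 0" "coprime A q" "coprime (A * q) B"
  defines "R \<equiv> (real A / real (totient A) - 1) * real (totient q) + 1"
  shows "(pg_deg (A * q * B) (q * B) \<ge> pg_deg (A * q * B) B \<longleftrightarrow> real B \<ge> R)
    \<and> (pg_deg (A * q * B) (q * B) = pg_deg (A * q * B) B \<longleftrightarrow> real B = R)"
proof -
  let ?dqB = "pg_deg (A * q * B) (q * B)" and ?dB = "pg_deg (A * q * B) B"
  have pos: "real (totient A) > 0" using assms(1) by simp
  have diff: "real ?dqB - real ?dB = real (totient A) * (real B - R)"
    unfolding R_def by (rule pg_deg_difference[OF assms(1-5)])
  have "?dqB \<ge> ?dB \<longleftrightarrow> real ?dqB - real ?dB \<ge> 0" by simp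
  also have "\<dots> \<longleftrightarrow> real B \<ge> R" unfolding diff using pos by (simp add: zero_le_mult_iff)
  finally have ge: "?dqB \<ge> ?dB \<longleftrightarrow> real B \<ge> R" .
  have "?dqB = ?dB \<longleftrightarrow> real ?dqB - real ?dB = 0" by simp
  also have "\<dots> \<longleftrightarrow> real B = R" unfolding diff using pos by simp
  finally have eq: "?dqB = ?dB \<longleftrightarrow> real B = R" .
  from ge eq show ?thesis ..
qed

lemma coprime_prod_strict_mono_primes:
  fixes p :: "'a::linorder \<Rightarrow> nat"
  assumes "\<And>i. i \<in> K \<Longrightarrow> prime (p i)" "strict_mono_on K p" "I \<union> J \<subseteq> K" "I \<inter> J = {}"
  shows "coprime (\<Prod>i\<in>I. p i) (\<Prod>j\<in>J. p j)"
proof (intro prod_coprime_left prod_coprime_right)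
  fix i j assume "i \<in> I" "j \<in> J"
  moreover have "inj_on p K" using assms(2) by (rule strict_mono_on_imp_inj_on)
  ultimately have "p i \<noteq> p j" using assms(3,4) by (auto dest: inj_onD)
  moreover have "prime (p i)" "prime (p j)"
    using assms(1,3) \<open>i \<in> I\<close> \<open>j \<in> J\<close> by auto
  ultimately show "coprime (p i) (p j)"
    by (simp add: primes_coprime)
qed

theorem lemma3p2:
  fixes p :: "nat \<Rightarrow> nat" and r s n :: nat
  assumes "r \<ge> 3"
    and "\<And>i. i \<in> {1..r} \<Longrightarrow> prime (p i)"
    and "\<And>i j. i \<in> {1..r} \<Longrightarrow> j \<in> {1..r} \<Longrightarrow> i < j \<Longrightarrow> p i < p j"
    and "n = (\<Prod>i=1..r. p i)"
    and "3 \<le> s" and "s \<le> r"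
  shows "(pg_deg n (\<Prod>i=s-1..r. p i) \<ge> pg_deg n (\<Prod>i=s..r. p i) \<longleftrightarrow>
           real (\<Prod>i=s..r. p i) \<ge>
             (real (\<Prod>i=1..s-2. p i) / real (totient (\<Prod>i=1..s-2. p i)) - 1)
               * real (totient (p (s-1))) + 1)
       \<and> (pg_deg n (\<Prod>i=s-1..r. p i) = pg_deg n (\<Prod>i=s..r. p i) \<longleftrightarrow>
           real (\<Prod>i=s..r. p i) =
             (real (\<Prod>i=1..s-2. p i) / real (totient (\<Prod>i=1..s-2. p i)) - 1)
               * real (totient (p (s-1))) + 1)"
proof -
  define A where "A = (\<Prod>i=1..s-2. p i)"
  define B where "B = (\<Prod>i=s..r. p i)"
  define q where "q = p (s-1)"
  have "strict_mono_on {1..r} p"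
    using assms(3) by (intro strict_mono_onI)
  note coprime_blocks = coprime_prod_strict_mono_primes[OF assms(2) this]
  have A2: "A \<ge> 2"
  proof -
    have "p 1 dvd A" "prime (p 1)" unfolding A_def using assms(1,2,5) by (auto intro: dvd_prodI)
    moreover have "A > 0" unfolding A_def using assms(2,6) by (auto intro!: prod_pos prime_gt_0_nat)
    ultimately show ?thesis by (metis dvd_imp_le le_trans prime_ge_2_nat)
  qed
  have "B > 0" unfolding B_def using assms(2,5) by (auto intro!: prod_pos prime_gt_0_nat)
  have "prime q" unfolding q_def using assms(5,6) by (intro assms(2)) auto
  have qB: "(\<Prod>i=s-1..r. p i) = q * B"
    unfolding q_def B_def using assms(5,6) prod.atLeast_Suc_atMost[of "s-1" r p]
    by (simp add: Suc_diff_Suc)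
  have "{1..r} = {1..s-2} \<union> {s-1..r}" using assms(5,6) by auto
  then have "n = A * (\<Prod>i=s-1..r. p i)"
    unfolding assms(4) A_def by (simp add: prod.union_disjoint)
  then have n: "n = A * q * B" unfolding qB by (simp only: mult.assoc)
  have "coprime A (\<Prod>i\<in>{s-1}. p i)" "coprime A B" "coprime (\<Prod>i\<in>{s-1}. p i) B"
    unfolding A_def B_def using assms(5,6) by (intro coprime_blocks; auto)+
  then have "coprime A q" "coprime (A * q) B"
    unfolding q_def by simp_all
  then show ?thesis
    using pg_deg_compare[OF A2 \<open>prime q\<close> \<open>B > 0\<close>] unfolding n qB A_def B_def q_def by simp
qed

end
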